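(* Let $p,q>0$ and for $x,y\in\mathbb{R}$ and $f,g\in L^p(\mathbb{R}^d)$ set $h_p(x,y)=\sqrt{(|x|^p+|y|^p)|x-y|^p}$ and $H_p(f,g)=\sqrt{(\|f\|_p^p+\|g\|_p^p)\|f-g\|_p^p}$, where $\|f\|_p^p=\int_{\mathbb{R}^d}|f|^p$. Then: (i) for all $x,y\in\mathbb{R}$, $|x-y|^p\le\max(1,2^{\frac{p-1}{2}})h_p(x,y)$ and $|x^2-y^2|^{p/2}\le\max(1,2^{\frac{p-1}{2}})h_p(x,y)$; (ii) for all $f,g\in L^p(\mathbb{R}^d)$, $\int_{\mathbb{R}^d}h_p(f(\mathbf{r}),g(\mathbf{r}))\,\mathrm{d}\mathbf{r}\le H_p(f,g)$; (iii) for all $f,g\in L^p(\mathbb{R}^d)\cap L^q(\mathbb{R}^d)$ and $\lambda\in[0,1]$, $H_{\lambda p+(1-\lambda)q}(f,g)\le\sqrt{\lambda}\,H_p(f,g)+\sqrt{1-\lambda}\,H_q(f,g)$. *)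

theory Defs
  imports "HOL-Analysis.Analysis"
begin

definition hp :: "real \<Rightarrow> real \<Rightarrow> real \<Rightarrow> real" where
  "hp p x y = sqrt ((\<bar>x\<bar> powr p + \<bar>y\<bar> powr p) * \<bar>x - y\<bar> powr p)"

definition in_Lp :: "real \<Rightarrow> ('a::euclidean_space \<Rightarrow> real) \<Rightarrow> bool" where
  "in_Lp p f \<longleftrightarrow> f \<in> borel_measurable lebesgue \<and> integrable lebesgue (\<lambda>r. \<bar>f r\<bar> powr p)"

definition Lp_pow :: "real \<Rightarrow> ('a::euclidean_space \<Rightarrow> real) \<Rightarrow> real" where
  "Lp_pow p f = (\<integral>r. \<bar>f r\<bar> powr p \<partial>lebesgue)"

definition Hp :: "real \<Rightarrow> ('a::euclidean_space \<Rightarrow> real) \<Rightarrow> ('a \<Rightarrow> real) \<Rightarrow> real" where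
  "Hp p f g = sqrt ((Lp_pow p f + Lp_pow p g) * Lp_pow p (\<lambda>r. f r - g r))"

end

theory Submission imports Defs begin

text \<open>Everything rests on weighted AM-GM and its integrated form, Hoelder's inequality
  \<open>\<integral> u^l v^(1-l) \<le> (\<integral> u)^l (\<integral> v)^(1-l)\<close>.
  (i) follows from \<open>(a + b)^p \<le> max 1 2^(p-1) (a^p + b^p)\<close> applied to \<open>|x - y|\<close> and
  \<open>|x + y|\<close>, since \<open>|x^2 - y^2|^(p/2) = |x - y|^(p/2) |x + y|^(p/2)\<close>; (ii) is Hoelder
  with \<open>l = 1/2\<close>. For (iii) write \<open>|x|^r = (|x|^p)^l (|x|^q)^(1-l)\<close> with \<open>r = l p + (1-l) q\<close>:
  Hoelder gives \<open>\<parallel>f\<parallel>\<^sub>r^r \<le> (\<parallel>f\<parallel>\<^sub>p^p)^l (\<parallel>f\<parallel>\<^sub>q^q)^(1-l)\<close>, whence, using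
  superadditivity of \<open>(a, b) \<mapsto> a^l b^(1-l)\<close> for the sum \<open>\<parallel>f\<parallel> + \<parallel>g\<parallel>\<close>,
  \<open>H\<^sub>r \<le> H\<^sub>p^l H\<^sub>q^(1-l) \<le> l H\<^sub>p + (1-l) H\<^sub>q \<le> \<surd>l H\<^sub>p + \<surd>(1-l) H\<^sub>q\<close>.\<close>

lemma weighted_geometric_le_arithmetic_mean:
  fixes a b l :: real
  assumes "0 \<le> a" "0 \<le> b" "0 \<le> l" "l \<le> 1"
  shows "a powr l * b powr (1 - l) \<le> l * a + (1 - l) * b"
proof (cases "a = 0 \<or> b = 0")
  case True
  then show ?thesis using assms by auto
next
  case False
  then show ?thesis using Youngs_inequality_0[of l "1 - l" a b] assms by auto
qed

lemma weighted_geometric_mean_superadditive: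
  fixes a b c d l :: real
  assumes "0 \<le> a" "0 \<le> b" "0 \<le> c" "0 \<le> d" "0 \<le> l" "l \<le> 1"
  shows "a powr l * b powr (1 - l) + c powr l * d powr (1 - l)
           \<le> (a + c) powr l * (b + d) powr (1 - l)"
proof (cases "a + c = 0 \<or> b + d = 0")
  case True
  then have "(a = 0 \<and> c = 0) \<or> (b = 0 \<and> d = 0)" using assms by linarith
  then show ?thesis using assms by auto
next
  case False
  define S T where "S = a + c" and "T = b + d"
  have S: "S > 0" and T: "T > 0" using False assms by (auto simp: S_def T_def)
  define K where "K = S powr l * T powr (1 - l)"
  have scale: "x powr l * y powr (1 - l) = K * ((x / S) powr l * (y / T) powr (1 - l))"
    if "0 \<le> x" "0 \<le> y" for x y
    using S T that by (simp add: K_def powr_divide field_simps)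
  have "a powr l * b powr (1 - l) + c powr l * d powr (1 - l)
     \<le> K * (l * (a / S) + (1 - l) * (b / T)) + K * (l * (c / S) + (1 - l) * (d / T))"
    unfolding scale[OF assms(1,2)] scale[OF assms(3,4)]
    by (intro add_mono mult_left_mono weighted_geometric_le_arithmetic_mean)
       (use assms S T in \<open>auto simp: K_def\<close>)
  also have "\<dots> = K * (l * ((a + c) / S) + (1 - l) * ((b + d) / T))"
    by (simp add: algebra_simps add_divide_distrib)
  also have "\<dots> = K" using S T by (simp add: S_def T_def)
  finally show ?thesis by (simp add: K_def S_def T_def)
qed

lemma integrable_weighted_geometric_mean:
  fixes u v :: "'b \<Rightarrow> real"
  assumes "integrable M u" "integrable M v" "\<And>x. 0 \<le> u x" "\<And>x. 0 \<le> v x" "0 \<le> l" "l \<le> 1"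
  shows "integrable M (\<lambda>x. u x powr l * v x powr (1 - l))"
proof (rule Bochner_Integration.integrable_bound)
  show "integrable M (\<lambda>x. l * u x + (1 - l) * v x)" using assms by auto
  have [measurable]: "u \<in> borel_measurable M" "v \<in> borel_measurable M" using assms by auto
  show "(\<lambda>x. u x powr l * v x powr (1 - l)) \<in> borel_measurable M" by measurable
  show "AE x in M. norm (u x powr l * v x powr (1 - l)) \<le> norm (l * u x + (1 - l) * v x)"
    using weighted_geometric_le_arithmetic_mean assms by (auto simp: abs_of_nonneg)
qed

lemma integral_weighted_geometric_mean_le:
  fixes u v :: "'b \<Rightarrow> real"
  assumes iu: "integrable M u" and iv: "integrable M v"
    and u0: "\<And>x. 0 \<le> u x" and v0: "\<And>x. 0 \<le> v x" and l: "0 \<le> l" "l \<le> 1"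
  shows "(\<integral>x. u x powr l * v x powr (1 - l) \<partial>M)
           \<le> (\<integral>x. u x \<partial>M) powr l * (\<integral>x. v x \<partial>M) powr (1 - l)"
proof -
  define U V where "U = (\<integral>x. u x \<partial>M)" and "V = (\<integral>x. v x \<partial>M)"
  have "U \<ge> 0" "V \<ge> 0" using u0 v0 by (simp_all add: U_def V_def)
  show ?thesis
  proof (cases "U = 0 \<or> V = 0")
    case True
    then have "AE x in M. u x = 0 \<or> v x = 0"
      using integral_nonneg_eq_0_iff_AE[OF iu] integral_nonneg_eq_0_iff_AE[OF iv] u0 v0
      by (auto simp: U_def V_def)
    then have "AE x in M. u x powr l * v x powr (1 - l) = 0" by auto
    then have "(\<integral>x. u x powr l * v x powr (1 - l) \<partial>M) = 0"
      by (simp add: integral_eq_zero_AE)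
    then show ?thesis by (simp flip: U_def V_def)
  next
    case False
    with \<open>U \<ge> 0\<close> \<open>V \<ge> 0\<close> have U: "U > 0" and V: "V > 0" by auto
    define K where "K = U powr l * V powr (1 - l)"
    \<comment> \<open>pointwise AM-GM after normalising both integrals to 1\<close>
    have "(\<integral>x. u x powr l * v x powr (1 - l) \<partial>M)
          \<le> (\<integral>x. K * (l * (u x / U) + (1 - l) * (v x / V)) \<partial>M)"
    proof (rule integral_mono)
      show "integrable M (\<lambda>x. u x powr l * v x powr (1 - l))"
        by (rule integrable_weighted_geometric_mean) (use assms in auto)
      show "integrable M (\<lambda>x. K * (l * (u x / U) + (1 - l) * (v x / V)))" using iu iv by auto
      fix x
      have "u x powr l * v x powr (1 - l) = K * ((u x / U) powr l * (v x / V) powr (1 - l))"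
        using U V u0[of x] v0[of x] by (simp add: K_def powr_divide field_simps)
      also have "\<dots> \<le> K * (l * (u x / U) + (1 - l) * (v x / V))"
        by (intro mult_left_mono weighted_geometric_le_arithmetic_mean)
           (use U V u0 v0 l in \<open>auto simp: K_def\<close>)
      finally show "u x powr l * v x powr (1 - l) \<le> K * (l * (u x / U) + (1 - l) * (v x / V))" .
    qed
    also have "\<dots> = K * (l * (U / U) + (1 - l) * (V / V))"
      using iu iv by (simp add: U_def V_def)
    also have "\<dots> = K" using U V by simp
    finally show ?thesis by (simp add: K_def U_def V_def)
  qed
qed

lemma powr_add_le_max:
  fixes a b p :: real
  assumes a: "0 \<le> a" and b: "0 \<le> b" and p: "0 < p"
  shows "(a + b) powr p \<le> max 1 (2 powr (p - 1)) * (a powr p + b powr p)"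
proof (cases "p \<ge> 1")
  case True
  \<comment> \<open>the power-mean inequality, as superadditivity with exponent \<open>1/p\<close>\<close>
  have "a + b \<le> (a powr p + b powr p) powr (1/p) * 2 powr (1 - 1/p)"
    using weighted_geometric_mean_superadditive[of "a powr p" 1 "b powr p" 1 "1/p"] a b p True
    by (simp add: powr_powr)
  then have "(a + b) powr p \<le> ((a powr p + b powr p) powr (1/p) * 2 powr (1 - 1/p)) powr p"
    by (intro powr_mono2) (use a b p in auto)
  also have "\<dots> = (a powr p + b powr p) * 2 powr (p - 1)"
  proof -
    have "(1 - 1/p) * p = p - 1" using p by (simp add: field_simps)
    then show ?thesis using p a b by (simp add: powr_mult powr_powr)
  qed
  also have "\<dots> \<le> max 1 (2 powr (p - 1)) * (a powr p + b powr p)"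
    by (subst mult.commute, intro mult_right_mono) auto
  finally show ?thesis .
next
  case False
  show ?thesis
  proof (cases "a + b = 0")
    case True
    then show ?thesis using a b by simp
  next
    case nz: False
    define s where "s = a + b"
    have s: "s > 0" using a b nz by (simp add: s_def)
    \<comment> \<open>for \<open>p < 1\<close>, \<open>t \<le> t^p\<close> on \<open>[0,1]\<close> applied to \<open>a/s\<close> and \<open>b/s\<close>, which sum to 1\<close>
    have "a / s \<le> (a / s) powr p" "b / s \<le> (b / s) powr p"
      using powr_mono'[of p 1 "a/s"] powr_mono'[of p 1 "b/s"] False a b s by (simp_all add: s_def)
    moreover have "a / s + b / s = 1" using s by (simp add: s_def flip: add_divide_distrib)
    ultimately have "1 \<le> (a powr p + b powr p) / s powr p"
      using a b by (simp add: powr_divide add_divide_distrib)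
    then have "s powr p \<le> a powr p + b powr p" using s by (simp add: le_divide_eq_1_pos)
    also have "\<dots> \<le> max 1 (2 powr (p - 1)) * (a powr p + b powr p)"
      using mult_right_mono[of 1 "max 1 (2 powr (p - 1))" "a powr p + b powr p"] by simp
    finally show ?thesis by (simp add: s_def)
  qed
qed

lemma abs_powr_le_max_of_abs_le_add:
  fixes x y z p :: real
  assumes "\<bar>z\<bar> \<le> \<bar>x\<bar> + \<bar>y\<bar>" "0 < p"
  shows "\<bar>z\<bar> powr p \<le> max 1 (2 powr (p - 1)) * (\<bar>x\<bar> powr p + \<bar>y\<bar> powr p)"
proof -
  have "\<bar>z\<bar> powr p \<le> (\<bar>x\<bar> + \<bar>y\<bar>) powr p" by (intro powr_mono2) (use assms in auto)
  then show ?thesis using powr_add_le_max[OF abs_ge_zero abs_ge_zero \<open>0 < p\<close>, of x y] by linarith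
qed

lemma max_one_powr_half_squared:
  fixes p :: real
  shows "(max 1 (2 powr ((p - 1) / 2)))\<^sup>2 = max 1 (2 powr (p - 1))"
proof -
  have "(2 powr ((p - 1) / 2))\<^sup>2 = 2 powr (p - 1)"
    by (simp add: power2_eq_square flip: powr_add)
  moreover have "(max 1 c)\<^sup>2 = max 1 (c\<^sup>2)" if "0 \<le> c" for c :: real
  proof (cases "1 \<le> c")
    case True
    then show ?thesis using one_le_power[OF True, of 2] by (simp add: max_def)
  next
    case False
    then show ?thesis using power_le_one[of c 2] that by (simp add: max_def)
  qed
  ultimately show ?thesis by simp
qed

lemma sqrt_mult_le_sqrt_mult:
  fixes A C D E :: real
  assumes "0 \<le> A" "0 \<le> C" "0 \<le> D" "E \<le> C\<^sup>2 * A"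
  shows "sqrt D * sqrt E \<le> C * sqrt (A * D)"
proof -
  have "sqrt E \<le> C * sqrt A"
    using real_sqrt_le_mono[OF assms(4)] assms(1,2) by (simp add: real_sqrt_mult)
  then have "sqrt D * sqrt E \<le> sqrt D * (C * sqrt A)" by (intro mult_left_mono) (use assms in auto)
  then show ?thesis by (simp add: real_sqrt_mult ac_simps)
qed

lemma abs_diff_powr_le_hp:
  fixes x y p :: real
  assumes "0 < p"
  shows "\<bar>x - y\<bar> powr p \<le> max 1 (2 powr ((p - 1) / 2)) * hp p x y"
proof -
  have "\<bar>x - y\<bar> powr p \<le> (max 1 (2 powr ((p - 1) / 2)))\<^sup>2 * (\<bar>x\<bar> powr p + \<bar>y\<bar> powr p)"
    unfolding max_one_powr_half_squared
    by (rule abs_powr_le_max_of_abs_le_add) (use assms in auto)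
  then have "sqrt (\<bar>x - y\<bar> powr p) * sqrt (\<bar>x - y\<bar> powr p)
             \<le> max 1 (2 powr ((p - 1) / 2)) * hp p x y"
    unfolding hp_def by (intro sqrt_mult_le_sqrt_mult) auto
  then show ?thesis by simp
qed

lemma abs_square_diff_powr_le_hp:
  fixes x y p :: real
  assumes "0 < p"
  shows "\<bar>x\<^sup>2 - y\<^sup>2\<bar> powr (p / 2) \<le> max 1 (2 powr ((p - 1) / 2)) * hp p x y"
proof -
  have "\<bar>x\<^sup>2 - y\<^sup>2\<bar> powr (p / 2) = sqrt (\<bar>x - y\<bar> powr p) * sqrt (\<bar>x + y\<bar> powr p)"
    by (simp add: power2_eq_square algebra_simps powr_half_sqrt[symmetric] powr_powr
        flip: abs_mult powr_mult)
  also have "\<dots> \<le> max 1 (2 powr ((p - 1) / 2)) * hp p x y"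
    unfolding hp_def
    by (intro sqrt_mult_le_sqrt_mult abs_powr_le_max_of_abs_le_add[of "x + y" x y p,
          folded max_one_powr_half_squared]) (use assms in auto)
  finally show ?thesis .
qed

lemma Lp_pow_nonneg [simp]: "0 \<le> Lp_pow p f"
  by (simp add: Lp_pow_def)

lemma integrable_abs_diff_powr:
  fixes f g :: "'a::euclidean_space \<Rightarrow> real"
  assumes p: "0 < p" and f: "in_Lp p f" and g: "in_Lp p g"
  shows "integrable lebesgue (\<lambda>r. \<bar>f r - g r\<bar> powr p)"
proof (rule Bochner_Integration.integrable_bound)
  have [measurable]: "f \<in> borel_measurable lebesgue" "g \<in> borel_measurable lebesgue"
    using f g by (auto simp: in_Lp_def)
  show "(\<lambda>r. \<bar>f r - g r\<bar> powr p) \<in> borel_measurable lebesgue" by measurable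
  show "integrable lebesgue (\<lambda>r. max 1 (2 powr (p - 1)) * (\<bar>f r\<bar> powr p + \<bar>g r\<bar> powr p))"
    using f g by (auto simp: in_Lp_def)
  show "AE r in lebesgue. norm (\<bar>f r - g r\<bar> powr p)
          \<le> norm (max 1 (2 powr (p - 1)) * (\<bar>f r\<bar> powr p + \<bar>g r\<bar> powr p))"
    using abs_powr_le_max_of_abs_le_add[OF _ p] by (auto intro!: AE_I2)
qed

lemma nn_integral_hp_le_Hp:
  fixes f g :: "'a::euclidean_space \<Rightarrow> real"
  assumes p: "0 < p" and f: "in_Lp p f" and g: "in_Lp p g"
  shows "(\<integral>\<^sup>+ r. ennreal (hp p (f r) (g r)) \<partial>lebesgue) \<le> ennreal (Hp p f g)"
proof -
  define a b where "a = (\<lambda>r. \<bar>f r\<bar> powr p + \<bar>g r\<bar> powr p)" and "b = (\<lambda>r. \<bar>f r - g r\<bar> powr p)"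
  have ia: "integrable lebesgue a" using f g by (auto simp: a_def in_Lp_def)
  have ib: "integrable lebesgue b" unfolding b_def using integrable_abs_diff_powr[OF p f g] .
  have hp_eq: "hp p (f r) (g r) = a r powr (1/2) * b r powr (1 - 1/2)" for r
    by (simp add: hp_def a_def b_def real_sqrt_mult powr_half_sqrt)
  have int_a: "(\<integral>r. a r \<partial>lebesgue) = Lp_pow p f + Lp_pow p g"
    using f g by (simp add: a_def Lp_pow_def in_Lp_def)
  have int_b: "(\<integral>r. b r \<partial>lebesgue) = Lp_pow p (\<lambda>r. f r - g r)"
    by (simp add: b_def Lp_pow_def)
  have "(\<integral>\<^sup>+ r. ennreal (hp p (f r) (g r)) \<partial>lebesgue)
        = ennreal (\<integral>r. a r powr (1/2) * b r powr (1 - 1/2) \<partial>lebesgue)"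
    unfolding hp_eq
    by (rule nn_integral_eq_integral integrable_weighted_geometric_mean ia ib)+
       (auto simp: a_def b_def)
  also have "\<dots> \<le> ennreal ((\<integral>r. a r \<partial>lebesgue) powr (1/2) * (\<integral>r. b r \<partial>lebesgue) powr (1 - 1/2))"
    by (intro ennreal_leI integral_weighted_geometric_mean_le ia ib) (auto simp: a_def b_def)
  also have "\<dots> = ennreal (Hp p f g)"
    by (simp add: int_a int_b Hp_def powr_half_sqrt real_sqrt_mult)
  finally show ?thesis .
qed

lemma abs_powr_convex_comb:
  fixes x p q l :: real
  shows "\<bar>x\<bar> powr (l * p + (1 - l) * q) = (\<bar>x\<bar> powr p) powr l * (\<bar>x\<bar> powr q) powr (1 - l)"
  by (cases "x = 0") (simp_all add: powr_powr powr_add mult.commute)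

lemma Lp_pow_interpolation:
  fixes f :: "'a::euclidean_space \<Rightarrow> real"
  assumes "integrable lebesgue (\<lambda>r. \<bar>f r\<bar> powr p)" "integrable lebesgue (\<lambda>r. \<bar>f r\<bar> powr q)"
    and "0 \<le> l" "l \<le> 1"
  shows "Lp_pow (l * p + (1 - l) * q) f \<le> Lp_pow p f powr l * Lp_pow q f powr (1 - l)"
  unfolding Lp_pow_def abs_powr_convex_comb
  using integral_weighted_geometric_mean_le[OF assms(1,2) _ _ assms(3,4)] by simp

lemma Hp_interpolation:
  fixes f g :: "'a::euclidean_space \<Rightarrow> real"
  assumes p: "0 < p" and q: "0 < q" and fp: "in_Lp p f" and gp: "in_Lp p g"
    and fq: "in_Lp q f" and gq: "in_Lp q g" and l: "0 \<le> l" "l \<le> 1"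
  shows "Hp (l * p + (1 - l) * q) f g \<le> Hp p f g powr l * Hp q f g powr (1 - l)"
proof -
  define r where "r = l * p + (1 - l) * q"
  define Ap Aq Bp Bq where "Ap = Lp_pow p f + Lp_pow p g" and "Aq = Lp_pow q f + Lp_pow q g"
    and "Bp = Lp_pow p (\<lambda>x. f x - g x)" and "Bq = Lp_pow q (\<lambda>x. f x - g x)"
  have nonneg: "0 \<le> Ap" "0 \<le> Aq" "0 \<le> Bp" "0 \<le> Bq" by (simp_all add: Ap_def Aq_def Bp_def Bq_def)
  have "Lp_pow r f + Lp_pow r g
        \<le> Lp_pow p f powr l * Lp_pow q f powr (1 - l) + Lp_pow p g powr l * Lp_pow q g powr (1 - l)"
    unfolding r_def using fp gp fq gq l
    by (intro add_mono Lp_pow_interpolation) (auto simp: in_Lp_def)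
  also have "\<dots> \<le> Ap powr l * Aq powr (1 - l)"
    unfolding Ap_def Aq_def by (rule weighted_geometric_mean_superadditive) (use l in auto)
  finally have A: "Lp_pow r f + Lp_pow r g \<le> Ap powr l * Aq powr (1 - l)" .
  have B: "Lp_pow r (\<lambda>x. f x - g x) \<le> Bp powr l * Bq powr (1 - l)"
    unfolding r_def Bp_def Bq_def
    by (intro Lp_pow_interpolation integrable_abs_diff_powr) (use assms in auto)
  have "Hp r f g \<le> sqrt (Ap powr l * Aq powr (1 - l) * (Bp powr l * Bq powr (1 - l)))"
    unfolding Hp_def by (intro real_sqrt_le_mono mult_mono A B) (auto intro: add_nonneg_nonneg)
  also have "\<dots> = sqrt ((Ap * Bp) powr l * (Aq * Bq) powr (1 - l))"
    using nonneg by (simp add: powr_mult ac_simps)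
  also have "\<dots> = sqrt (Ap * Bp) powr l * sqrt (Aq * Bq) powr (1 - l)"
    using nonneg by (simp add: powr_half_sqrt[symmetric] powr_mult powr_powr mult.commute)
  also have "\<dots> = Hp p f g powr l * Hp q f g powr (1 - l)"
    by (simp add: Hp_def Ap_def Aq_def Bp_def Bq_def)
  finally show ?thesis by (simp add: r_def)
qed

lemma Hp_nonneg: "0 \<le> Hp p f g"
  by (simp add: Hp_def add_nonneg_nonneg)

lemma le_sqrt_of_unit_interval:
  fixes t :: real
  assumes "0 \<le> t" "t \<le> 1"
  shows "t \<le> sqrt t"
proof -
  have "sqrt t * sqrt t \<le> sqrt t * 1" by (intro mult_left_mono) (use assms in auto)
  then show ?thesis using assms by simp
qed

theorem lemma3p11:
  fixes p q :: real
  assumes "p > 0" and "q > 0"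
  shows "(\<forall>x y::real.
            \<bar>x - y\<bar> powr p \<le> max 1 (2 powr ((p - 1) / 2)) * hp p x y \<and>
            \<bar>x\<^sup>2 - y\<^sup>2\<bar> powr (p / 2) \<le> max 1 (2 powr ((p - 1) / 2)) * hp p x y)
       \<and> (\<forall>f g :: 'a::euclidean_space \<Rightarrow> real. in_Lp p f \<longrightarrow> in_Lp p g \<longrightarrow>
            (\<integral>\<^sup>+ r. ennreal (hp p (f r) (g r)) \<partial>lebesgue) \<le> ennreal (Hp p f g))
       \<and> (\<forall>(f :: 'a \<Rightarrow> real) g (l::real). in_Lp p f \<longrightarrow> in_Lp p g \<longrightarrow> in_Lp q f \<longrightarrow> in_Lp q g \<longrightarrow>
            0 \<le> l \<longrightarrow> l \<le> 1 \<longrightarrow>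
            Hp (l * p + (1 - l) * q) f g \<le> sqrt l * Hp p f g + sqrt (1 - l) * Hp q f g)"
proof (intro conjI allI impI)
  fix f g :: "'a \<Rightarrow> real" and l :: real
  assume Lp: "in_Lp p f" "in_Lp p g" "in_Lp q f" "in_Lp q g" and l: "0 \<le> l" "l \<le> 1"
  have "Hp (l * p + (1 - l) * q) f g \<le> Hp p f g powr l * Hp q f g powr (1 - l)"
    by (rule Hp_interpolation) (use assms Lp l in auto)
  also have "\<dots> \<le> l * Hp p f g + (1 - l) * Hp q f g"
    by (rule weighted_geometric_le_arithmetic_mean) (use l in \<open>auto simp: Hp_nonneg\<close>)
  also have "\<dots> \<le> sqrt l * Hp p f g + sqrt (1 - l) * Hp q f g"
    by (intro add_mono mult_right_mono le_sqrt_of_unit_interval) (use l in \<open>auto simp: Hp_nonneg\<close>)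
  finally show "Hp (l * p + (1 - l) * q) f g \<le> sqrt l * Hp p f g + sqrt (1 - l) * Hp q f g" .
qed (use assms abs_diff_powr_le_hp abs_square_diff_powr_le_hp nn_integral_hp_le_Hp in auto)

end
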